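(* Consider smoothed MaxSat/1-Flip on a CNF formula with $n$ variables and $m$ clauses, where each clause weight $w_i$ is drawn independently from a distribution with density $f_i:[0,1]\to[0,\phi]$, and let $B$ be the maximum number of distinct clauses in which any variable occurs. Then the expected maximum number of iterations of local search (over all initial assignments and all improving sequences) is $O(2^B n m^2\phi)$.
   Context: MaxSat/$k$-Flip: given a CNF formula with clauses $C_1,\dots,C_m$ over Boolean variables $x_1,\dots,x_n$ and clause weights $w_1,\dots,w_m$, the weight of a truth assignment is the total weight of satisfied clauses; the $k$-Flip neighbours of an assignment are those obtained by changing the truth value of at most $k$ variables; a solution is an assignment with no neighbour of strictly larger weight. Local search repeatedly moves to a strictly better neighbour. *)

theory Defs
  imports "HOL-Probability.Probability"
begin

text \<open>Literals are pairs (x, b): variable x with polarity b; the literal is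
 true under assignment a iff a x = b.\<close>

type_synonym clause = "(nat \<times> bool) set"
type_synonym cnf = "clause list"

definition clause_sat :: "clause \<Rightarrow> (nat \<Rightarrow> bool) \<Rightarrow> bool" where
  "clause_sat C a \<longleftrightarrow> (\<exists>(x, b) \<in> C. a x = b)"

definition cnf_weight :: "cnf \<Rightarrow> (nat \<Rightarrow> real) \<Rightarrow> (nat \<Rightarrow> bool) \<Rightarrow> real" where
  "cnf_weight F w a = (\<Sum>i<length F. if clause_sat (F ! i) a then w i else 0)"

definition valid_assign :: "nat \<Rightarrow> (nat \<Rightarrow> bool) \<Rightarrow> bool" where
  "valid_assign n a \<longleftrightarrow> (\<forall>x\<ge>n. \<not> a x)"

definition kflip_nbr :: "nat \<Rightarrow> nat \<Rightarrow> (nat \<Rightarrow> bool) \<Rightarrow> (nat \<Rightarrow> bool) \<Rightarrow> bool" where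
  "kflip_nbr k n a b \<longleftrightarrow> valid_assign n a \<and> valid_assign n b \<and>
     card {x \<in> {..<n}. a x \<noteq> b x} \<le> k"

definition improving_seq ::
  "nat \<Rightarrow> nat \<Rightarrow> cnf \<Rightarrow> (nat \<Rightarrow> real) \<Rightarrow> (nat \<Rightarrow> bool) list \<Rightarrow> bool" where
  "improving_seq k n F w as \<longleftrightarrow> as \<noteq> [] \<and> (\<forall>a \<in> set as. valid_assign n a) \<and>
     (\<forall>j. Suc j < length as \<longrightarrow>
        kflip_nbr k n (as ! j) (as ! Suc j) \<and>
        cnf_weight F w (as ! j) < cnf_weight F w (as ! Suc j))"

definition max_iter :: "nat \<Rightarrow> nat \<Rightarrow> cnf \<Rightarrow> (nat \<Rightarrow> real) \<Rightarrow> nat" where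
  "max_iter k n F w = Sup {length as - 1 | as. improving_seq k n F w as}"

definition max_occ :: "nat \<Rightarrow> cnf \<Rightarrow> nat" where
  "max_occ n F = Sup ((\<lambda>x. card {C \<in> set F. \<exists>b. (x, b) \<in> C}) ` {..<n})"

definition smoothed_density :: "real \<Rightarrow> (real \<Rightarrow> real) \<Rightarrow> bool" where
  "smoothed_density \<phi> f \<longleftrightarrow> f \<in> borel_measurable borel \<and>
     (\<forall>x. 0 \<le> f x \<and> f x \<le> \<phi>) \<and> (\<forall>x. x \<notin> {0..1} \<longrightarrow> f x = 0) \<and>
     (\<integral>\<^sup>+ x. ennreal (f x) \<partial>lborel) = 1"

end

theory Submission
  imports Defs
begin

text \<open>A 1-Flip step from a to a(x := \<not> a x) raises the weight by the linear form
  sum_i c_i w_i, whose coefficients c_i \<in> {-1, 0, 1} depend only on a x and on which of the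
  at most B clauses containing x are already satisfied by another literal; so at most
  2^(B+1) n coefficient vectors occur. Since weights lie in [0,1], a run of t steps gains
  at most m in total, so one of its steps gains at most m/t. For a fixed nonzero c,
  conditioning on all weights but one shows that sum_i c_i w_i lands in (0, \<epsilon>] with
  probability at most \<phi> \<epsilon>. A union bound gives P(max_iter \<ge> t) \<le> 2^(B+1) n \<phi> m / t,
  and summing over t \<le> 2^m, where the harmonic sum is at most m + 1, yields the bound.\<close>

definition flip_coeff :: "cnf \<Rightarrow> nat \<Rightarrow> (nat \<Rightarrow> bool) \<Rightarrow> nat \<Rightarrow> real" where
  "flip_coeff F x a i = (if i < length F then
     of_bool (clause_sat (F ! i) (a(x := \<not> a x))) - of_bool (clause_sat (F ! i) a) else 0)"

definition flip_coeffs :: "nat \<Rightarrow> cnf \<Rightarrow> (nat \<Rightarrow> real) set" where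
  "flip_coeffs n F = {flip_coeff F x a | x a. x < n \<and> valid_assign n a}"

lemma cnf_weight_flip_gain:
  "cnf_weight F w (a(x := \<not> a x)) - cnf_weight F w a = (\<Sum>i<length F. flip_coeff F x a i * w i)"
  unfolding cnf_weight_def flip_coeff_def sum_subtractf[symmetric]
  by (rule sum.cong) auto

lemma flip_coeff_cases: "flip_coeff F x a i \<in> {-1, 0, 1}"
  unfolding flip_coeff_def by simp

lemma kflip_nbr_1_imp_flip:
  assumes "kflip_nbr 1 n a b" "a \<noteq> b"
  shows "\<exists>x<n. b = a(x := \<not> a x)"
proof -
  define D where "D = {x \<in> {..<n}. a x \<noteq> b x}"
  have "\<forall>x\<ge>n. \<not> a x" "\<forall>x\<ge>n. \<not> b x"
    using assms(1) unfolding kflip_nbr_def valid_assign_def by auto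
  then have differ_in_D: "a z \<noteq> b z \<Longrightarrow> z \<in> D" for z
    unfolding D_def by (cases "z < n") auto
  have "card D \<le> 1" using assms(1) unfolding kflip_nbr_def D_def by simp
  moreover have "finite D" unfolding D_def by simp
  ultimately have D_single: "\<forall>u\<in>D. \<forall>v\<in>D. u = v" by (simp add: card_le_Suc0_iff_eq)
  obtain y where "a y \<noteq> b y" using assms(2) by blast
  have "b = a(y := \<not> a y)"
  proof
    fix z
    show "b z = (a(y := \<not> a y)) z"
      using \<open>a y \<noteq> b y\<close> differ_in_D D_single by (cases "z = y") auto
  qed
  moreover have "y < n" using differ_in_D[OF \<open>a y \<noteq> b y\<close>] unfolding D_def by simp
  ultimately show ?thesis by blast
qed

definition sat_clauses :: "cnf \<Rightarrow> (nat \<Rightarrow> bool) \<Rightarrow> nat set" where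
  "sat_clauses F a = {i \<in> {..<length F}. clause_sat (F ! i) a}"

lemma cnf_weight_eq_sum_sat_clauses: "cnf_weight F w a = sum w (sat_clauses F a)"
  unfolding cnf_weight_def sat_clauses_def by (rule sum.inter_filter[symmetric]) simp

lemma improving_seq_length_le:
  assumes "improving_seq k n F w as"
  shows "length as \<le> 2 ^ length F"
proof -
  have "sorted_wrt (<) (map (cnf_weight F w) as)"
    using assms unfolding improving_seq_def by (simp add: sorted_wrt_iff_nth_Suc_transp)
  then have "distinct (map (sum w \<circ> sat_clauses F) as)"
    by (simp add: strict_sorted_iff cnf_weight_eq_sum_sat_clauses[abs_def] comp_def)
  then have "distinct (map (sat_clauses F) as)" by (simp add: distinct_map inj_on_def)
  from distinct_card[OF this] have "length as = card (sat_clauses F ` set as)" by simp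
  also have "\<dots> \<le> card (Pow {..<length F})"
    by (rule card_mono) (auto simp: sat_clauses_def)
  finally show ?thesis by (simp add: card_Pow)
qed

lemma max_iter_attained:
  obtains as where "improving_seq k n F w as" "max_iter k n F w = length as - 1"
proof -
  let ?S = "{length as - 1 | as. improving_seq k n F w as}"
  have "?S \<subseteq> {..2 ^ length F}"
  proof
    fix r assume "r \<in> ?S"
    then obtain as where "r = length as - 1" "improving_seq k n F w as" by blast
    then show "r \<in> {..2 ^ length F}" using improving_seq_length_le[of k n F w as] by simp
  qed
  moreover have "improving_seq k n F w [\<lambda>_. False]"
    unfolding improving_seq_def valid_assign_def by simp
  ultimately have "finite ?S" "?S \<noteq> {}" by (auto intro: finite_subset)
  then have "Max ?S \<in> ?S" by (rule Max_in)
  then have "max_iter k n F w \<in> ?S"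
    unfolding max_iter_def using \<open>finite ?S\<close> \<open>?S \<noteq> {}\<close> by (simp add: cSup_eq_Max)
  then show ?thesis using that by blast
qed

lemma max_iter_less: "max_iter k n F w < 2 ^ length F"
proof -
  obtain as where "improving_seq k n F w as" "max_iter k n F w = length as - 1"
    by (rule max_iter_attained)
  moreover from this(1) have "as \<noteq> []" "length as \<le> 2 ^ length F"
    by (auto simp: improving_seq_def intro: improving_seq_length_le)
  ultimately show ?thesis by (cases as) auto
qed

lemma cnf_weight_bounds:
  assumes "\<forall>i<length F. w i \<in> {0..1}"
  shows "0 \<le> cnf_weight F w a" "cnf_weight F w a \<le> real (length F)"
proof -
  show "0 \<le> cnf_weight F w a" using assms unfolding cnf_weight_def by (auto intro: sum_nonneg)
  have "cnf_weight F w a \<le> (\<Sum>i<length F. 1)" using assms unfolding cnf_weight_def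
    by (intro sum_mono) auto
  then show "cnf_weight F w a \<le> real (length F)" by simp
qed

lemma small_flip_gain_exists:
  assumes unit: "\<forall>i<length F. w i \<in> {0..1}" and t: "1 \<le> t" "t \<le> max_iter 1 n F w"
  shows "\<exists>c\<in>flip_coeffs n F. (\<Sum>i<length F. c i * w i) \<in> {0<..real (length F) / real t}"
proof (rule ccontr)
  assume no_small: "\<not> ?thesis"
  obtain as where seq: "improving_seq 1 n F w as" and len: "max_iter 1 n F w = length as - 1"
    by (rule max_iter_attained)
  define W where "W = cnf_weight F w"
  define r where "r = length as - 1"
  have "t \<le> r" using t len unfolding r_def by simp
  have steps: "Suc j < length as \<longleftrightarrow> j < r" for j
    using seq unfolding r_def improving_seq_def by (cases as) auto
  have big_gain: "real (length F) / real t < W (as ! Suc j) - W (as ! j)" if j: "j < r" for j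
  proof -
    have nbr: "kflip_nbr 1 n (as ! j) (as ! Suc j)" and up: "W (as ! j) < W (as ! Suc j)"
      using seq j steps unfolding improving_seq_def W_def by auto
    then obtain x where x: "x < n" "as ! Suc j = (as ! j)(x := \<not> (as ! j) x)"
      using kflip_nbr_1_imp_flip by fastforce
    have "valid_assign n (as ! j)" using nbr unfolding kflip_nbr_def by simp
    then have "flip_coeff F x (as ! j) \<in> flip_coeffs n F"
      using x(1) unfolding flip_coeffs_def by blast
    moreover have "(\<Sum>i<length F. flip_coeff F x (as ! j) i * w i) = W (as ! Suc j) - W (as ! j)"
      unfolding x(2) W_def by (rule cnf_weight_flip_gain[symmetric])
    ultimately show ?thesis using no_small up by force
  qed
  have "real (length F) = real t * (real (length F) / real t)" using t by simp
  also have "\<dots> \<le> real r * (real (length F) / real t)"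
    using \<open>t \<le> r\<close> by (intro mult_right_mono) auto
  also have "\<dots> = (\<Sum>j<r. real (length F) / real t)" by simp
  also have "\<dots> < (\<Sum>j<r. W (as ! Suc j) - W (as ! j))"
    using \<open>t \<le> r\<close> t big_gain by (intro sum_strict_mono) (auto simp: lessThan_empty_iff)
  also have "\<dots> = W (as ! r) - W (as ! 0)" by (rule sum_lessThan_telescope)
  also have "\<dots> \<le> real (length F)"
    using cnf_weight_bounds[OF unit] unfolding W_def by (smt (verit))
  finally show False by simp
qed

definition occurrences :: "cnf \<Rightarrow> nat \<Rightarrow> clause set" where
  "occurrences F x = {C \<in> set F. \<exists>b. (x, b) \<in> C}"

lemma card_occurrences_le: "x < n \<Longrightarrow> card (occurrences F x) \<le> max_occ n F"
  unfolding max_occ_def occurrences_def by (rule le_cSup_finite) auto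

text \<open>The flip coefficient of x at a is determined by the value v = a x and by the set S
  of clauses containing x that are satisfied by some other literal.\<close>
definition local_flip_coeff :: "cnf \<Rightarrow> nat \<Rightarrow> bool \<times> clause set \<Rightarrow> nat \<Rightarrow> real" where
  "local_flip_coeff F x vS i = (case vS of (v, S) \<Rightarrow> if i < length F then
     of_bool (F ! i \<in> S \<or> (x, \<not> v) \<in> F ! i) - of_bool (F ! i \<in> S \<or> (x, v) \<in> F ! i) else 0)"

lemma clause_sat_fun_upd:
  "clause_sat C (a(x := v)) \<longleftrightarrow> (\<exists>(y, b) \<in> C. y \<noteq> x \<and> a y = b) \<or> (x, v) \<in> C"
proof
  assume "clause_sat C (a(x := v))"
  then obtain y b where yb: "(y, b) \<in> C" "(a(x := v)) y = b" unfolding clause_sat_def by blast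
  show "(\<exists>(y, b) \<in> C. y \<noteq> x \<and> a y = b) \<or> (x, v) \<in> C"
  proof (cases "y = x")
    case True
    then show ?thesis using yb by simp
  next
    case False
    then show ?thesis using yb by (intro disjI1 bexI[of _ "(y, b)"]) simp_all
  qed
next
  assume "(\<exists>(y, b) \<in> C. y \<noteq> x \<and> a y = b) \<or> (x, v) \<in> C"
  then consider y b where "(y, b) \<in> C" "y \<noteq> x" "a y = b" | "(x, v) \<in> C" by blast
  then show "clause_sat C (a(x := v))"
  proof cases
    case (1 y b)
    then show ?thesis unfolding clause_sat_def by (intro bexI[of _ "(y, b)"]) simp_all
  next
    case 2
    then show ?thesis unfolding clause_sat_def by (intro bexI[of _ "(x, v)"]) simp_all
  qed
qed

lemma flip_coeff_eq_local:
  "flip_coeff F x a =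
     local_flip_coeff F x (a x, {C \<in> occurrences F x. \<exists>(y, b) \<in> C. y \<noteq> x \<and> a y = b})"
    (is "_ = local_flip_coeff F x (a x, ?S)")
proof
  fix i
  show "flip_coeff F x a i = local_flip_coeff F x (a x, ?S) i"
  proof (cases "i < length F")
    case True
    define C where "C = F ! i"
    define R where "R \<longleftrightarrow> (\<exists>(y, b) \<in> C. y \<noteq> x \<and> a y = b)"
    have sat_flip: "clause_sat C (a(x := \<not> a x)) \<longleftrightarrow> R \<or> (x, \<not> a x) \<in> C"
      unfolding R_def by (rule clause_sat_fun_upd)
    have sat: "clause_sat C a \<longleftrightarrow> R \<or> (x, a x) \<in> C"
      using clause_sat_fun_upd[of C a x "a x"] unfolding R_def by simp
    have "C \<in> set F" using True unfolding C_def by simp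
    then consider "C \<in> ?S \<longleftrightarrow> R" | "(x, a x) \<notin> C" "(x, \<not> a x) \<notin> C" "C \<notin> ?S"
      unfolding occurrences_def R_def by blast
    then show ?thesis
      using True sat sat_flip unfolding flip_coeff_def local_flip_coeff_def C_def[symmetric]
      by cases simp_all
  qed (simp add: flip_coeff_def local_flip_coeff_def)
qed

lemma card_flip_coeffs:
  "finite (flip_coeffs n F)" "card (flip_coeffs n F) \<le> 2 * 2 ^ max_occ n F * n"
proof -
  define L where "L x = local_flip_coeff F x ` (UNIV \<times> Pow (occurrences F x))" for x
  have fin_occ: "finite (occurrences F x)" for x unfolding occurrences_def by simp
  have sub: "flip_coeffs n F \<subseteq> (\<Union>x<n. L x)"
  proof
    fix c assume "c \<in> flip_coeffs n F"
    then obtain x a where "x < n" "c = flip_coeff F x a" unfolding flip_coeffs_def by blast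
    then show "c \<in> (\<Union>x<n. L x)" unfolding L_def flip_coeff_eq_local by blast
  qed
  have fin: "finite (\<Union>x<n. L x)" unfolding L_def using fin_occ by simp
  then show "finite (flip_coeffs n F)" using sub by (rule finite_subset[rotated])
  have "card (flip_coeffs n F) \<le> card (\<Union>x<n. L x)" by (rule card_mono[OF fin sub])
  also have "\<dots> \<le> (\<Sum>x<n. card (L x))" by (rule card_UN_le) simp
  also have "\<dots> \<le> (\<Sum>x<n. 2 * 2 ^ max_occ n F)"
  proof (rule sum_mono)
    fix x assume "x \<in> {..<n}"
    have "card (L x) \<le> card (UNIV \<times> Pow (occurrences F x) :: (bool \<times> clause set) set)"
      unfolding L_def by (rule card_image_le) (simp add: fin_occ)
    also have "\<dots> = 2 * 2 ^ card (occurrences F x)"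
      by (simp add: card_cartesian_product card_Pow fin_occ)
    also have "\<dots> \<le> 2 * 2 ^ max_occ n F"
      using card_occurrences_le \<open>x \<in> {..<n}\<close> by simp
    finally show "card (L x) \<le> 2 * 2 ^ max_occ n F" .
  qed
  finally show "card (flip_coeffs n F) \<le> 2 * 2 ^ max_occ n F * n" by (simp add: mult.commute)
qed

lemma sum_inverse_upto_power2_le: "(\<Sum>t=1..(2::nat) ^ k. 1 / real t) \<le> real k + 1"
proof (induction k)
  case (Suc k)
  have "(\<Sum>t=1..(2::nat) ^ Suc k. 1 / real t) = (\<Sum>t=1..2 ^ k + 2 ^ k. 1 / real t)"
    by (simp add: mult_2)
  also have "\<dots> = (\<Sum>t=1..2 ^ k. 1 / real t) + (\<Sum>t=2 ^ k + 1..2 ^ k + 2 ^ k. 1 / real t)"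
    by (rule sum.ub_add_nat) simp
  also have "(\<Sum>t=2 ^ k + 1..(2::nat) ^ k + 2 ^ k. 1 / real t)
             \<le> real (card {2 ^ k + 1..(2::nat) ^ k + 2 ^ k}) * (1 / 2 ^ k)"
  proof (rule sum_bounded_above)
    fix t assume "t \<in> {2 ^ k + 1..(2::nat) ^ k + 2 ^ k}"
    then have "real (2 ^ k) \<le> real t" by simp
    then show "1 / real t \<le> 1 / 2 ^ k" by (simp add: frac_le)
  qed
  also have "\<dots> = 1" by simp
  finally show ?case using Suc.IH by simp
qed simp

definition weight_measure :: "(real \<Rightarrow> real) \<Rightarrow> real measure" where
  "weight_measure g = density lborel (\<lambda>x. ennreal (g x))"

lemma sets_weight_measure [simp]: "sets (weight_measure g) = sets borel"
  by (simp add: weight_measure_def)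

lemma smoothed_density_measurable:
  "smoothed_density \<phi> g \<Longrightarrow> (\<lambda>x. ennreal (g x)) \<in> borel_measurable lborel"
  unfolding smoothed_density_def by (auto simp: measurable_lborel1)

lemma prob_space_weight_measure:
  assumes "smoothed_density \<phi> g"
  shows "prob_space (weight_measure g)"
proof (rule prob_spaceI)
  show "emeasure (weight_measure g) (space (weight_measure g)) = 1"
    using assms smoothed_density_measurable[OF assms]
    by (simp add: weight_measure_def emeasure_density smoothed_density_def)
qed

lemma emeasure_weight_measure_Icc_le:
  assumes g: "smoothed_density \<phi> g" and "a \<le> b"
  shows "emeasure (weight_measure g) {a..b} \<le> ennreal (\<phi> * (b - a))"
proof -
  have "emeasure (weight_measure g) {a..b} = (\<integral>\<^sup>+ x. ennreal (g x) * indicator {a..b} x \<partial>lborel)"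
    using smoothed_density_measurable[OF g] by (simp add: weight_measure_def emeasure_density)
  also have "\<dots> \<le> (\<integral>\<^sup>+ x. ennreal \<phi> * indicator {a..b} x \<partial>lborel)"
    using g unfolding smoothed_density_def
    by (intro nn_integral_mono) (auto split: split_indicator intro: ennreal_leI)
  also have "\<dots> = ennreal \<phi> * ennreal (b - a)"
    using \<open>a \<le> b\<close> by (simp add: nn_integral_cmult_indicator)
  also have "\<dots> = ennreal (\<phi> * (b - a))"
    using \<open>a \<le> b\<close> by (cases "0 \<le> \<phi>") (auto simp: ennreal_mult ennreal_neg mult_nonpos_nonneg)
  finally show ?thesis .
qed

lemma AE_weight_measure_unit_interval:
  assumes g: "smoothed_density \<phi> g"
  shows "AE x in weight_measure g. x \<in> {0..1}"
  unfolding weight_measure_def using g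
  by (subst AE_density[OF smoothed_density_measurable[OF g]])
     (auto simp: smoothed_density_def intro!: AE_I2)

lemma borel_measurable_linear_form:
  fixes c :: "nat \<Rightarrow> real"
  assumes "\<And>i. i < m \<Longrightarrow> sets (M i) = sets borel"
  shows "(\<lambda>w. \<Sum>i<m. c i * w i) \<in> borel_measurable (PiM {..<m} M)"
proof -
  have component: "(\<lambda>w. w i) \<in> borel_measurable (PiM {..<m} M)" if "i < m" for i
    using measurable_component_singleton[of i "{..<m}" M] that
    by (simp add: measurable_cong_sets[OF refl assms])
  show ?thesis
    by (intro borel_measurable_sum borel_measurable_times borel_measurable_const)
       (auto intro: component)
qed

lemma emeasure_PiM_linear_form_le:
  fixes c :: "nat \<Rightarrow> real"
  assumes prob: "\<And>i. i < m \<Longrightarrow> prob_space (M i)"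
    and borel: "\<And>i. i < m \<Longrightarrow> sets (M i) = sets borel"
    and j: "j < m" "\<bar>c j\<bar> = 1"
    and Icc: "\<And>a. emeasure (M j) {a..a + \<epsilon>} \<le> ennreal (\<phi> * \<epsilon>)"
  shows "emeasure (PiM {..<m} M) {w \<in> space (PiM {..<m} M). (\<Sum>i<m. c i * w i) \<in> {0<..\<epsilon>}}
           \<le> ennreal (\<phi> * \<epsilon>)"
proof -
  \<comment> \<open>product_sigma_finite needs a sigma-finite measure at every index, hence the padding\<close>
  define M' where "M' i = (if i < m then M i else lborel)" for i
  have PiM_M': "PiM {..<m} M = PiM {..<m} M'" by (rule PiM_cong) (auto simp: M'_def)
  interpret product_sigma_finite M'
    unfolding product_sigma_finite_def M'_def
    by (auto intro: prob prob_space_imp_sigma_finite lborel.sigma_finite_measure_axioms)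
  define I where "I = {..<m} - {j}"
  have insert_j: "{..<m} = insert j I" using j unfolding I_def by auto
  have I: "j \<notin> I" "finite I" unfolding I_def by simp_all
  define A where "A = {w \<in> space (PiM {..<m} M'). (\<Sum>i<m. c i * w i) \<in> {0<..\<epsilon>}}"
  have "A = (\<lambda>w. \<Sum>i<m. c i * w i) -` {0<..\<epsilon>} \<inter> space (PiM {..<m} M')" unfolding A_def by auto
  then have A_sets: "A \<in> sets (PiM {..<m} M')"
    using borel_measurable_linear_form[of m M' c] borel by (simp add: M'_def measurable_sets)
  have "emeasure (PiM {..<m} M') A = (\<integral>\<^sup>+ x. (\<integral>\<^sup>+ y. indicator A (x(j := y)) \<partial>M' j) \<partial>PiM I M')"
    using A_sets I unfolding insert_j by (simp add: product_nn_integral_insert flip: nn_integral_indicator)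
  also have "\<dots> \<le> (\<integral>\<^sup>+ x. ennreal (\<phi> * \<epsilon>) \<partial>PiM I M')"
  proof (rule nn_integral_mono)
    fix x
    define r where "r = (\<Sum>i\<in>I. c i * x i)"
    define a where "a = (if c j = 1 then - r else r - \<epsilon>)"
    have "(\<Sum>i<m. c i * (x(j := y)) i) = c j * y + r" for y
      unfolding insert_j r_def using I by (auto intro!: sum.cong)
    then have "x(j := y) \<in> A \<Longrightarrow> y \<in> {a..a + \<epsilon>}" for y
      using j(2) unfolding A_def a_def by (auto simp: abs_if split: if_splits)
    then have "(\<integral>\<^sup>+ y. indicator A (x(j := y)) \<partial>M' j) \<le> (\<integral>\<^sup>+ y. indicator {a..a + \<epsilon>} y \<partial>M' j)"
      by (intro nn_integral_mono) (auto split: split_indicator)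
    also have "\<dots> = emeasure (M j) {a..a + \<epsilon>}"
      using j borel by (simp add: M'_def)
    finally show "(\<integral>\<^sup>+ y. indicator A (x(j := y)) \<partial>M' j) \<le> ennreal (\<phi> * \<epsilon>)"
      using Icc order_trans by blast
  qed
  also have "\<dots> = ennreal (\<phi> * \<epsilon>)"
  proof -
    have "prob_space (PiM I M')"
      by (rule prob_space_PiM) (auto simp: M'_def I_def intro: prob)
    then show ?thesis by (simp add: prob_space.emeasure_space_1)
  qed
  finally show ?thesis unfolding PiM_M' A_def .
qed

definition small_gain_set :: "nat \<Rightarrow> cnf \<Rightarrow> real \<Rightarrow> (nat \<Rightarrow> real) set" where
  "small_gain_set n F \<epsilon> = {w. \<exists>c\<in>flip_coeffs n F. (\<Sum>i<length F. c i * w i) \<in> {0<..\<epsilon>}}"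

lemma max_iter_le_sum_indicator_small_gain:
  assumes "\<forall>i<length F. w i \<in> {0..1}" and "w \<in> S"
  shows "ennreal (real (max_iter 1 n F w))
           \<le> (\<Sum>t=1..2 ^ length F. indicator (small_gain_set n F (real (length F) / real t) \<inter> S) w)"
proof -
  let ?T = "{1..2 ^ length F} \<inter> {t. w \<in> small_gain_set n F (real (length F) / real t) \<inter> S}"
  have "{1..max_iter 1 n F w} \<subseteq> ?T"
  proof
    fix t assume t: "t \<in> {1..max_iter 1 n F w}"
    then have "w \<in> small_gain_set n F (real (length F) / real t)"
      using small_flip_gain_exists[OF assms(1)] unfolding small_gain_set_def by simp
    moreover have "t \<le> 2 ^ length F" using t max_iter_less[of 1 n F w] by simp
    ultimately show "t \<in> ?T" using t \<open>w \<in> S\<close> by simp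
  qed
  from card_mono[OF _ this] have "of_nat (max_iter 1 n F w) \<le> (of_nat (card ?T) :: ennreal)"
    by simp
  also have "\<dots> = (\<Sum>t=1..2 ^ length F. indicator (small_gain_set n F (real (length F) / real t) \<inter> S) w)"
    by (simp add: indicator_def)
  finally show ?thesis by (simp add: ennreal_of_nat_eq_real_of_nat)
qed

lemma emeasure_small_gain_set_le:
  assumes dens: "\<forall>i<length F. smoothed_density \<phi> (f i)" and "0 \<le> \<epsilon>"
  defines "P \<equiv> PiM {..<length F} (\<lambda>i. weight_measure (f i))"
  shows "small_gain_set n F \<epsilon> \<inter> space P \<in> sets P"
    and "emeasure P (small_gain_set n F \<epsilon> \<inter> space P)
           \<le> of_nat (card (flip_coeffs n F)) * ennreal (\<phi> * \<epsilon>)"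
proof -
  define E where "E c = {w \<in> space P. (\<Sum>i<length F. c i * w i) \<in> {0<..\<epsilon>}}" for c
  have union: "small_gain_set n F \<epsilon> \<inter> space P = (\<Union>c\<in>flip_coeffs n F. E c)"
    unfolding small_gain_set_def E_def by blast
  have E_sets: "E c \<in> sets P" for c
  proof -
    have "E c = (\<lambda>w. \<Sum>i<length F. c i * w i) -` {0<..\<epsilon>} \<inter> space P" unfolding E_def by auto
    then show ?thesis unfolding P_def by (simp add: measurable_sets[OF borel_measurable_linear_form])
  qed
  show "small_gain_set n F \<epsilon> \<inter> space P \<in> sets P"
    unfolding union using card_flip_coeffs(1) E_sets by blast
  have E_le: "emeasure P (E c) \<le> ennreal (\<phi> * \<epsilon>)" if "c \<in> flip_coeffs n F" for c
  proof (cases "\<exists>j<length F. c j \<noteq> 0")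
    case True
    then obtain j where "j < length F" "c j \<noteq> 0" by blast
    moreover have "c j \<in> {-1, 0, 1}" using that flip_coeff_cases unfolding flip_coeffs_def by blast
    ultimately show ?thesis unfolding P_def E_def
      using dens \<open>0 \<le> \<epsilon>\<close>
      by (intro emeasure_PiM_linear_form_le)
         (auto intro: prob_space_weight_measure emeasure_weight_measure_Icc_le[THEN order_trans])
  next
    case False
    then have "E c = {}" unfolding E_def by auto
    then show ?thesis by simp
  qed
  have "emeasure P (\<Union>c\<in>flip_coeffs n F. E c) \<le> (\<Sum>c\<in>flip_coeffs n F. emeasure P (E c))"
    using card_flip_coeffs(1) E_sets by (intro emeasure_subadditive_finite) auto
  also have "\<dots> \<le> (\<Sum>c\<in>flip_coeffs n F. ennreal (\<phi> * \<epsilon>))" by (intro sum_mono E_le)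
  finally show "emeasure P (small_gain_set n F \<epsilon> \<inter> space P) \<le> of_nat (card (flip_coeffs n F)) * ennreal (\<phi> * \<epsilon>)"
    unfolding union by simp
qed

lemma nn_integral_max_iter_le_harmonic:
  assumes dens: "\<forall>i<length F. smoothed_density \<phi> (f i)" and "0 \<le> \<phi>"
  defines "m \<equiv> length F"
  shows "(\<integral>\<^sup>+ w. ennreal (real (max_iter 1 n F w)) \<partial>PiM {..<m} (\<lambda>i. weight_measure (f i)))
           \<le> ennreal (real (card (flip_coeffs n F)) * \<phi> * real m * (\<Sum>t=1..2 ^ m. 1 / real t))"
proof -
  define P where "P = PiM {..<m} (\<lambda>i. weight_measure (f i))"
  define K where "K = card (flip_coeffs n F)"
  define E where "E t = small_gain_set n F (real m / real t) \<inter> space P" for t :: nat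
  have E: "E t \<in> sets P" "emeasure P (E t) \<le> of_nat K * ennreal (\<phi> * (real m / real t))" for t
    using emeasure_small_gain_set_le[OF dens, of "real m / real t" n] unfolding E_def P_def K_def m_def
    by auto
  have "AE w in P. \<forall>i\<in>{..<m}. w i \<in> {0..1}"
    unfolding P_def using dens m_def
    by (intro AE_finite_allI AE_PiM_component prob_space_weight_measure AE_weight_measure_unit_interval)
       auto
  then have "AE w in P. ennreal (real (max_iter 1 n F w)) \<le> (\<Sum>t=1..2 ^ m. indicator (E t) w)"
    unfolding E_def m_def
    by (rule AE_mp[OF _ AE_space[THEN AE_mp]], intro AE_I2 impI max_iter_le_sum_indicator_small_gain)
       auto
  then have "(\<integral>\<^sup>+ w. ennreal (real (max_iter 1 n F w)) \<partial>P) \<le> (\<integral>\<^sup>+ w. (\<Sum>t=1..2 ^ m. indicator (E t) w) \<partial>P)"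
    by (rule nn_integral_mono_AE)
  also have "\<dots> = (\<Sum>t=1..2 ^ m. emeasure P (E t))"
    using E(1) by (subst nn_integral_sum) auto
  also have "\<dots> \<le> (\<Sum>t=1..2 ^ m. of_nat K * ennreal (\<phi> * (real m / real t)))"
    by (intro sum_mono E(2))
  also have "\<dots> = (\<Sum>t=1..2 ^ m. ennreal (real K * \<phi> * real m * (1 / real t)))"
    using \<open>0 \<le> \<phi>\<close>
    by (intro sum.cong refl) (simp add: ennreal_of_nat_eq_real_of_nat ennreal_mult[symmetric])
  also have "\<dots> = ennreal (real K * \<phi> * real m * (\<Sum>t=1..2 ^ m. 1 / real t))"
    using \<open>0 \<le> \<phi>\<close> by (subst sum_ennreal) (auto simp: sum_distrib_left)
  finally show ?thesis unfolding P_def K_def .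
qed

lemma nn_integral_max_iter_le:
  assumes dens: "\<forall>i<length F. smoothed_density \<phi> (f i)"
  shows "(\<integral>\<^sup>+ w. ennreal (real (max_iter 1 n F w)) \<partial>PiM {..<length F} (\<lambda>i. weight_measure (f i)))
           \<le> ennreal (4 * 2 ^ max_occ n F * real n * real (length F) ^ 2 * \<phi>)"
proof (cases "length F = 0")
  case True
  then show ?thesis using max_iter_less[of 1 n F] by simp
next
  case False
  define m where "m = length F"
  have "m > 0" and "0 \<le> \<phi>"
    using False dens unfolding m_def smoothed_density_def by (auto intro: order_trans)
  have "real (card (flip_coeffs n F)) \<le> real (2 * 2 ^ max_occ n F * n)"
    using card_flip_coeffs(2)[of n F] by (simp only: of_nat_le_iff)
  moreover have "(\<Sum>t=1..2 ^ m. 1 / real t) \<le> 2 * real m"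
    using sum_inverse_upto_power2_le[of m] \<open>m > 0\<close> by simp
  ultimately have "real (card (flip_coeffs n F)) * \<phi> * real m * (\<Sum>t=1..2 ^ m. 1 / real t)
      \<le> (2 * 2 ^ max_occ n F * real n) * \<phi> * real m * (2 * real m)"
    using \<open>0 \<le> \<phi>\<close> by (intro mult_mono) (auto intro: sum_nonneg)
  also have "\<dots> = 4 * 2 ^ max_occ n F * real n * real m ^ 2 * \<phi>"
    by (simp add: power2_eq_square algebra_simps)
  finally show ?thesis
    using nn_integral_max_iter_le_harmonic[OF dens \<open>0 \<le> \<phi>\<close>, of n] unfolding m_def
    by (auto intro: order_trans ennreal_leI)
qed

theorem mainTheorem9:
  "\<exists>c>0. \<forall>(n::nat) (F::cnf) (f::nat \<Rightarrow> real \<Rightarrow> real) (\<phi>::real).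
     (\<forall>C \<in> set F. \<forall>(x, b) \<in> C. x < n) \<longrightarrow>
     (\<forall>i < length F. smoothed_density \<phi> (f i)) \<longrightarrow>
     (\<integral>\<^sup>+ w. ennreal (real (max_iter 1 n F w))
        \<partial>(PiM {..<length F} (\<lambda>i. density lborel (\<lambda>x. ennreal (f i x)))))
     \<le> ennreal (c * 2 ^ max_occ n F * real n * real (length F) ^ 2 * \<phi>)"
  using nn_integral_max_iter_le unfolding weight_measure_def
  by (intro exI[of _ 4]) auto

end
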